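(* Let $E=\mathbb{N}=\{0,1,2,\dots\}$ with the discrete topology, $\rho(n)=e^{n^2}$, and fix $\alpha>1$. For $t\ge0$ define transition probabilities $p_{i,j}(t)$ by: $p_{0,0}(t)=1$; for even $n\ge2$, $p_{n,n}(t)=e^{-(n-1)^\alpha t}$, $p_{n,0}(t)=1-e^{-(n-1)^\alpha t}$; for odd $n$, $p_{n,n}(t)=e^{-n^\alpha t}$, $p_{n,n+1}(t)=e^{-n}n^\alpha t e^{-n^\alpha t}$, $p_{n,0}(t)=1-e^{-n^\alpha t}-e^{-n}n^\alpha te^{-n^\alpha t}$; all other $p_{i,j}(t)=0$ (these are the transition probabilities $e^{tA}$ of the continuous-time Markov chain with rates $a_{n,n+1}=n^\alpha e^{-n}$, $a_{n,n}=-n^\alpha$, $a_{n,0}=n^\alpha(1-e^{-n})$ for odd $n$, and $a_{n,n}=-(n-1)^\alpha$, $a_{n,0}=(n-1)^\alpha$ for even $n$). Set $P(t)f(n):=\sum_j p_{n,j}(t)f(j)$. Then each $P(t)$ is a well-defined bounded linear operator on $\mathscr{B}^\rho(\mathbb{N})$, and for odd $n$ $$P(t)\rho(n)=\rho(n)e^{-n^\alpha t}+\rho(n+1)n^\alpha te^{-n^\alpha t}e^{-n}+\rho(0)\big(1-e^{-n^\alpha t}-e^{-n}n^\alpha te^{-n^\alpha t}\big).$$ The family $(P(t))_{t\ge0}$ satisfies conditions (P1), (P2), (P3), (P5) of a generalized Feller semigroup, but $\|P(t)\|_{L(\mathscr{B}^\rho(\mathbb{N}))}\to\infty$ as $t\downarrow0$;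 in particular (P4) fails and $(P(t))$ is not strongly continuous on $\mathscr{B}^\rho(\mathbb{N})$.
   Context: For a weighted space $(E,\rho)$ and $f:E\to\mathbb{R}$ put $\|f\|_\rho:=\sup_{x\in E}|f(x)|/\rho(x)$; $\mathscr{B}^\rho(E)$ denotes the closure of $C_b(E)$ with respect to $\|\cdot\|_\rho$ inside $\{f:\|f\|_\rho<\infty\}$ (for discrete $\mathbb{N}$ and $\rho(n)=e^{n^2}$ these are the functions with $f(n)/\rho(n)\to0$). The conditions are: (P1) $P(0)=\mathrm{Id}$; (P2) $P(t+s)=P(s)P(t)$ for all $s,t\ge0$; (P3) $\lim_{t\downarrow0}P(t)f(x)=f(x)$ for all $f\in\mathscr{B}^\rho(E)$, $x\in E$; (P4) there exist $\varepsilon>0$, $C<\infty$ with $\|P(t)\|_{L(\mathscr{B}^\rho(E))}\le C$ for all $t\in[0,\varepsilon]$; (P5) each $P(t)$ is a positive operator. Strong continuity means $\|P(t)f-f\|_\rho\to0$ as $t\downarrow0$ for every $f\in\mathscr{B}^\rho(E)$. *)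

theory Defs
  imports "HOL-Analysis.Analysis"
begin

text \<open>Weighted sup-norm  sup_x |f x| / rho x  (meaningful when the quotient is bounded).\<close>
definition rho_bdd :: "('a \<Rightarrow> real) \<Rightarrow> ('a \<Rightarrow> real) \<Rightarrow> bool" where
  "rho_bdd \<rho> f \<longleftrightarrow> bdd_above (range (\<lambda>x. \<bar>f x\<bar> / \<rho> x))"

definition rho_norm :: "('a \<Rightarrow> real) \<Rightarrow> ('a \<Rightarrow> real) \<Rightarrow> real" where
  "rho_norm \<rho> f = (SUP x. \<bar>f x\<bar> / \<rho> x)"

definition B_rho :: "('a::topological_space \<Rightarrow> real) \<Rightarrow> ('a \<Rightarrow> real) set" where
  "B_rho \<rho> = {f. rho_bdd \<rho> f \<and>
     (\<forall>e>0. \<exists>g. continuous_on UNIV g \<and> bounded (range g) \<and>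
          rho_bdd \<rho> (\<lambda>x. f x - g x) \<and> rho_norm \<rho> (\<lambda>x. f x - g x) < e)}"

definition op_norm_rho :: "('a::topological_space \<Rightarrow> real) \<Rightarrow> (('a \<Rightarrow> real) \<Rightarrow> ('a \<Rightarrow> real)) \<Rightarrow> ereal" where
  "op_norm_rho \<rho> T = (SUP f\<in>{f\<in>B_rho \<rho>. rho_norm \<rho> f \<le> 1}. ereal (rho_norm \<rho> (T f)))"

definition rhoN :: "nat \<Rightarrow> real" where
  "rhoN n = exp (real n ^ 2)"

definition ptrans :: "real \<Rightarrow> real \<Rightarrow> nat \<Rightarrow> nat \<Rightarrow> real" where
  "ptrans \<alpha> t i j =
    (if i = 0 then (if j = 0 then 1 else 0)
     else if even i then
       (if j = i then exp (- ((real i - 1) powr \<alpha>) * t)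
        else if j = 0 then 1 - exp (- ((real i - 1) powr \<alpha>) * t)
        else 0)
     else
       (if j = i then exp (- (real i powr \<alpha>) * t)
        else if j = i + 1 then exp (- real i) * real i powr \<alpha> * t * exp (- (real i powr \<alpha>) * t)
        else if j = 0 then 1 - exp (- (real i powr \<alpha>) * t)
                 - exp (- real i) * real i powr \<alpha> * t * exp (- (real i powr \<alpha>) * t)
        else 0))"

definition Pop :: "real \<Rightarrow> real \<Rightarrow> (nat \<Rightarrow> real) \<Rightarrow> nat \<Rightarrow> real" where
  "Pop \<alpha> t f n = (\<Sum>j. ptrans \<alpha> t n j * f j)"

end

theory Submission
  imports Defs "HOL-Real_Asymp.Real_Asymp"
begin

text \<open>
  Each row of the transition matrix is supported on {0, n, n + 1}, so P(t) is an explicit finite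
  convex combination and (P1), (P2), (P3), (P5) are direct computations with exponentials.
  In the weighted norm the only dangerous entry is the jump n -> n + 1 from odd n: it multiplies
  the weight by rho(n + 1) / rho(n) = e^(2n + 1), while its probability is about n^alpha t e^(-n).
  For fixed t the resulting gain n^alpha t e^(n + 1 - n^alpha t) tends to 0 because alpha > 1, so
  P(t) is bounded; but choosing n^alpha t close to 1 shows that the gain, and with it the operator
  norm of P(t), explodes as t -> 0.
\<close>

lemma rho_le_rho_norm:
  assumes "rho_bdd r f" shows "\<bar>f x\<bar> / r x \<le> rho_norm r f"
  using assms unfolding rho_bdd_def rho_norm_def by (auto intro: cSUP_upper)

lemma rho_norm_le:
  assumes "\<And>x. \<bar>f x\<bar> / r x \<le> M" shows "rho_norm r f \<le> M"
  unfolding rho_norm_def by (rule cSUP_least) (auto intro: assms)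

lemma rho_bddI:
  assumes "\<And>x. \<bar>f x\<bar> / r x \<le> M" shows "rho_bdd r f"
  unfolding rho_bdd_def using assms by (intro bdd_aboveI2) auto

lemma B_rho_imp_rho_bdd: "f \<in> B_rho r \<Longrightarrow> rho_bdd r f"
  unfolding B_rho_def by blast

lemma B_rho_nat_imp_tendsto_zero:
  fixes r :: "nat \<Rightarrow> real"
  assumes pos: "\<And>n. r n > 0" and lim: "(\<lambda>n. 1 / r n) \<longlonglongrightarrow> 0" and f: "f \<in> B_rho r"
  shows "(\<lambda>n. f n / r n) \<longlonglongrightarrow> 0"
proof (rule LIMSEQ_I)
  fix e :: real assume e: "e > 0"
  then obtain g where g: "bounded (range g)" "rho_bdd r (\<lambda>x. f x - g x)"
      "rho_norm r (\<lambda>x. f x - g x) < e / 2"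
    using f half_gt_zero[OF e] unfolding B_rho_def mem_Collect_eq by blast
  from g(1) obtain B where B: "\<And>n. \<bar>g n\<bar> \<le> B" unfolding bounded_iff by auto
  have "(\<lambda>n. B * (1 / r n)) \<longlonglongrightarrow> B * 0" using tendsto_mult_left[OF lim] .
  then have "eventually (\<lambda>n. B * (1 / r n) < e / 2) sequentially"
    using e by (intro order_tendstoD) auto
  then obtain N where N: "\<And>n. n \<ge> N \<Longrightarrow> B / r n < e / 2"
    unfolding eventually_sequentially by auto
  have "\<bar>f n\<bar> / r n < e" if "n \<ge> N" for n
  proof -
    have "\<bar>f n\<bar> / r n \<le> \<bar>f n - g n\<bar> / r n + \<bar>g n\<bar> / r n"
      using pos[of n] by (simp add: add_divide_distrib[symmetric] divide_right_mono)
    moreover have "\<bar>f n - g n\<bar> / r n < e / 2"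
      using rho_le_rho_norm[OF g(2), of n] g(3) by linarith
    moreover have "\<bar>g n\<bar> / r n \<le> B / r n"
      using B[of n] pos[of n] by (simp add: divide_right_mono)
    ultimately show ?thesis using N[OF that] by linarith
  qed
  then show "\<exists>N. \<forall>n\<ge>N. norm (f n / r n - 0) < e"
    using pos by (auto simp: abs_divide less_imp_le intro!: exI[of _ N])
qed

lemma tendsto_zero_imp_B_rho_nat:
  fixes r :: "nat \<Rightarrow> real"
  assumes pos: "\<And>n. r n > 0" and lim: "(\<lambda>n. f n / r n) \<longlonglongrightarrow> 0"
  shows "f \<in> B_rho r"
proof -
  have norm_eq: "\<bar>f n\<bar> / r n = norm (f n / r n)" for n using pos[of n] by (simp add: abs_divide)
  obtain K where "\<And>n. norm (f n / r n) \<le> K"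
    using convergent_imp_Bseq[OF convergentI[OF lim]] unfolding Bseq_def by auto
  then have bdd: "rho_bdd r f" by (intro rho_bddI) (simp add: norm_eq)
  have "\<exists>g. continuous_on UNIV g \<and> bounded (range g) \<and>
          rho_bdd r (\<lambda>x. f x - g x) \<and> rho_norm r (\<lambda>x. f x - g x) < e" if e: "e > 0" for e
  proof -
    obtain N where N: "\<And>n. n \<ge> N \<Longrightarrow> norm (f n / r n) < e / 2"
      using LIMSEQ_D[OF lim, of "e / 2"] e by auto
    define g where "g n = (if n < N then f n else 0)" for n
    have "range g \<subseteq> insert 0 (f ` {..<N})" unfolding g_def by auto
    then have "finite (range g)" by (rule finite_subset) simp
    then have "bounded (range g)" by (rule finite_imp_bounded)
    moreover have le: "\<bar>f n - g n\<bar> / r n \<le> e / 2" for n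
      using N[of n] e pos[of n] by (auto simp: g_def abs_divide)
    moreover have "rho_norm r (\<lambda>x. f x - g x) < e"
      using rho_norm_le[of _ r "e / 2", OF le] e by linarith
    ultimately show ?thesis
      using rho_bddI[OF le] by (intro exI[of _ g]) simp
  qed
  then show ?thesis unfolding B_rho_def using bdd by blast
qed

lemma rhoN_pos: "rhoN n > 0" by (simp add: rhoN_def)

lemma rhoN_ge_1: "rhoN n \<ge> 1" by (simp add: rhoN_def)

lemma rhoN_Suc: "rhoN (Suc n) = exp (2 * real n + 1) * rhoN n"
proof -
  have "real (Suc n) ^ 2 = (2 * real n + 1) + real n ^ 2"
    by (simp add: power2_eq_square algebra_simps)
  then show ?thesis by (simp add: rhoN_def exp_add)
qed

lemma inverse_rhoN_tendsto_0: "(\<lambda>n. 1 / rhoN n) \<longlonglongrightarrow> 0"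
  unfolding rhoN_def by real_asymp

lemma B_rhoN_iff: "f \<in> B_rho rhoN \<longleftrightarrow> (\<lambda>n. f n / rhoN n) \<longlonglongrightarrow> 0"
  using B_rho_nat_imp_tendsto_zero tendsto_zero_imp_B_rho_nat rhoN_pos inverse_rhoN_tendsto_0 by blast

lemma B_rhoN_diff: "f \<in> B_rho rhoN \<Longrightarrow> g \<in> B_rho rhoN \<Longrightarrow> (\<lambda>x. f x - g x) \<in> B_rho rhoN"
  unfolding B_rhoN_iff diff_divide_distrib by (rule tendsto_diff[where a = 0 and b = 0, simplified])

definition hold :: "real \<Rightarrow> real \<Rightarrow> nat \<Rightarrow> real" where
  "hold \<alpha> t m = exp (- (real m powr \<alpha>) * t)"

definition stay_prob :: "real \<Rightarrow> real \<Rightarrow> nat \<Rightarrow> real" where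
  "stay_prob \<alpha> t n = (if n = 0 then 1 else if even n then hold \<alpha> t (n - 1) else hold \<alpha> t n)"

definition jump_prob :: "real \<Rightarrow> real \<Rightarrow> nat \<Rightarrow> real" where
  "jump_prob \<alpha> t n = (if odd n then exp (- real n) * real n powr \<alpha> * t * hold \<alpha> t n else 0)"

text \<open>For n = 0 the first and the last summand overlap; stay_prob 0 = 1 makes the last one vanish.\<close>

lemma ptrans_eq:
  "ptrans \<alpha> t n j =
     (if j = n then stay_prob \<alpha> t n else 0) + (if j = Suc n then jump_prob \<alpha> t n else 0)
     + (if j = 0 then 1 - stay_prob \<alpha> t n - jump_prob \<alpha> t n else 0)"
  by (auto simp: ptrans_def stay_prob_def jump_prob_def hold_def of_nat_diff)

lemma summable_ptrans_row: "summable (\<lambda>j. ptrans \<alpha> t n j * f j)"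
  by (rule summable_finite[of "{0, n, Suc n}"]) (auto simp: ptrans_eq)

lemma Pop_eq:
  "Pop \<alpha> t f n = stay_prob \<alpha> t n * f n + jump_prob \<alpha> t n * f (Suc n)
     + (1 - stay_prob \<alpha> t n - jump_prob \<alpha> t n) * f 0"
proof -
  have "Pop \<alpha> t f n = (\<Sum>j\<in>{0, n, Suc n}. ptrans \<alpha> t n j * f j)"
    unfolding Pop_def by (rule suminf_finite) (auto simp: ptrans_eq)
  also have "\<dots> = stay_prob \<alpha> t n * f n + jump_prob \<alpha> t n * f (Suc n)
     + (1 - stay_prob \<alpha> t n - jump_prob \<alpha> t n) * f 0"
    by (cases "n = 0") (auto simp: ptrans_eq jump_prob_def stay_prob_def algebra_simps)
  finally show ?thesis .
qed

lemma hold_nonneg: "hold \<alpha> t m \<ge> 0"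
  by (simp add: hold_def)

lemma hold_le_1: "t \<ge> 0 \<Longrightarrow> hold \<alpha> t m \<le> 1"
  by (simp add: hold_def)

lemma hold_add: "hold \<alpha> (t + s) m = hold \<alpha> t m * hold \<alpha> s m"
  by (simp add: hold_def exp_add[symmetric] algebra_simps)

lemma stay_prob_nonneg: "stay_prob \<alpha> t n \<ge> 0"
  by (simp add: stay_prob_def hold_nonneg)

lemma jump_prob_nonneg: "t \<ge> 0 \<Longrightarrow> jump_prob \<alpha> t n \<ge> 0"
  by (simp add: jump_prob_def hold_nonneg)

lemma stay_prob_add_jump_prob_le_1:
  assumes "t \<ge> 0" shows "stay_prob \<alpha> t n + jump_prob \<alpha> t n \<le> 1"
proof (cases "odd n")
  case True
  define x where "x = real n powr \<alpha> * t"
  have "x \<ge> 0" using assms by (simp add: x_def)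
  then have "exp (- real n) * x * exp (- x) \<le> x * exp (- x)"
    by (intro mult_right_mono) (simp_all add: mult_left_le_one_le)
  moreover have "stay_prob \<alpha> t n + jump_prob \<alpha> t n = exp (- x) + exp (- real n) * x * exp (- x)"
    using True by (simp add: stay_prob_def jump_prob_def hold_def x_def algebra_simps)
  ultimately have "stay_prob \<alpha> t n + jump_prob \<alpha> t n \<le> (1 + x) * exp (- x)"
    by (simp add: algebra_simps)
  also have "\<dots> \<le> exp x * exp (- x)"
    by (intro mult_right_mono exp_ge_add_one_self) simp
  finally show ?thesis by (simp add: exp_minus_inverse)
qed (auto simp: stay_prob_def jump_prob_def hold_le_1 assms)

lemma stay_prob_add: "stay_prob \<alpha> (t + s) n = stay_prob \<alpha> t n * stay_prob \<alpha> s n"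
  by (simp add: stay_prob_def hold_add)

lemma jump_prob_add:
  "jump_prob \<alpha> (t + s) n = stay_prob \<alpha> s n * jump_prob \<alpha> t n + jump_prob \<alpha> s n * stay_prob \<alpha> t (Suc n)"
  by (auto simp: stay_prob_def jump_prob_def hold_add algebra_simps elim: oddE)

lemma Pop_0_left: "Pop \<alpha> t f 0 = f 0"
  by (simp add: Pop_eq stay_prob_def jump_prob_def)

lemma Pop_zero_time: "Pop \<alpha> 0 f = f"
  by (simp add: fun_eq_iff Pop_eq stay_prob_def jump_prob_def hold_def)

lemma Pop_add_time: "Pop \<alpha> (t + s) f = Pop \<alpha> s (Pop \<alpha> t f)"
proof
  fix n
  have "jump_prob \<alpha> s n = 0 \<or> jump_prob \<alpha> t (Suc n) = 0"
    by (simp add: jump_prob_def)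
  then show "Pop \<alpha> (t + s) f n = Pop \<alpha> s (Pop \<alpha> t f) n"
    unfolding Pop_eq[of _ _ "Pop \<alpha> t f"] Pop_0_left unfolding Pop_eq stay_prob_add jump_prob_add
    by (elim disjE) (simp_all add: algebra_simps)
qed

lemma Pop_linear: "Pop \<alpha> t (\<lambda>x. a * f x + b * g x) = (\<lambda>x. a * Pop \<alpha> t f x + b * Pop \<alpha> t g x)"
  by (simp add: fun_eq_iff Pop_eq algebra_simps)

lemma Pop_nonneg:
  assumes "t \<ge> 0" "\<And>x. f x \<ge> 0" shows "Pop \<alpha> t f n \<ge> 0"
  using stay_prob_nonneg[of \<alpha> t n] jump_prob_nonneg[OF assms(1), of \<alpha> n]
    stay_prob_add_jump_prob_le_1[OF assms(1), of \<alpha> n] assms(2)[of n] assms(2)[of 0] assms(2)[of "Suc n"]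
  unfolding Pop_eq by (intro add_nonneg_nonneg mult_nonneg_nonneg) auto

lemma isCont_stay_prob: "isCont (\<lambda>t. stay_prob \<alpha> t n) t"
  unfolding stay_prob_def hold_def by (cases "n = 0"; cases "even n") (simp_all add: continuous_intros)

lemma isCont_jump_prob: "isCont (\<lambda>t. jump_prob \<alpha> t n) t"
  unfolding jump_prob_def hold_def by (cases "even n") (simp_all add: continuous_intros)

lemma Pop_tendsto_at_right_0: "((\<lambda>t. Pop \<alpha> t f n) \<longlongrightarrow> f n) (at_right 0)"
proof -
  have "isCont (\<lambda>t. Pop \<alpha> t f n) 0"
    unfolding Pop_eq by (intro continuous_intros isCont_stay_prob isCont_jump_prob)
  then show ?thesis
    by (simp add: isCont_def filterlim_at_split Pop_zero_time)
qed

lemma Pop_odd_rhoN: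
  "odd n \<Longrightarrow> Pop \<alpha> t rhoN n = rhoN n * exp (- (real n powr \<alpha>) * t)
          + rhoN (n + 1) * real n powr \<alpha> * t * exp (- (real n powr \<alpha>) * t) * exp (- real n)
          + rhoN 0 * (1 - exp (- (real n powr \<alpha>) * t)
                     - exp (- real n) * real n powr \<alpha> * t * exp (- (real n powr \<alpha>) * t))"
  by (simp add: Pop_eq stay_prob_def jump_prob_def hold_def algebra_simps)

definition jump_gain :: "real \<Rightarrow> real \<Rightarrow> nat \<Rightarrow> real" where
  "jump_gain \<alpha> t n = jump_prob \<alpha> t n * rhoN (Suc n) / rhoN n"

lemma jump_gain_odd:
  assumes "odd n"
  shows "jump_gain \<alpha> t n = real n powr \<alpha> * t * exp (real n + 1 - real n powr \<alpha> * t)"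
proof -
  define x where "x = real n powr \<alpha> * t"
  have "exp (- real n) * exp (- x) * exp (2 * real n + 1) = exp (real n + 1 - x)"
    unfolding exp_add[symmetric] by (simp add: algebra_simps)
  then have "exp (- real n) * x * exp (- x) * exp (2 * real n + 1) = x * exp (real n + 1 - x)"
    by (metis mult.commute mult.left_commute)
  then show ?thesis
    using assms rhoN_pos[of n]
    by (simp add: jump_gain_def jump_prob_def hold_def rhoN_Suc x_def)
qed

lemma jump_gain_nonneg: "t \<ge> 0 \<Longrightarrow> jump_gain \<alpha> t n \<ge> 0"
  by (simp add: jump_gain_def jump_prob_nonneg rhoN_pos less_imp_le)

lemma jump_gain_tendsto_0:
  assumes "\<alpha> > 1" "t \<ge> 0" shows "jump_gain \<alpha> t \<longlonglongrightarrow> 0"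
proof -
  define h where "h = (\<lambda>n::nat. real n powr \<alpha> * t * exp (real n + 1 - real n powr \<alpha> * t))"
  have lim: "h \<longlonglongrightarrow> 0"
  proof (cases "t = 0")
    case False
    then have "t > 0" using assms(2) by simp
    then show ?thesis using assms(1) unfolding h_def by real_asymp
  qed (simp add: h_def)
  have le: "norm (jump_gain \<alpha> t n) \<le> h n" for n
  proof (cases "odd n")
    case True
    then show ?thesis using jump_gain_nonneg[OF assms(2), of \<alpha> n] by (simp add: jump_gain_odd h_def)
  next
    case False
    then show ?thesis using assms(2) by (simp add: jump_gain_def jump_prob_def h_def)
  qed
  show ?thesis
    by (rule Lim_null_comparison[OF always_eventually lim]) (use le in blast)
qed

lemma Pop_weighted_le:
  assumes "t \<ge> 0"
  shows "\<bar>Pop \<alpha> t f n\<bar> / rhoN n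
    \<le> \<bar>f n\<bar> / rhoN n + \<bar>f 0\<bar> / rhoN n + jump_gain \<alpha> t n * (\<bar>f (Suc n)\<bar> / rhoN (Suc n))"
proof -
  have p: "stay_prob \<alpha> t n \<ge> 0" "jump_prob \<alpha> t n \<ge> 0" "stay_prob \<alpha> t n + jump_prob \<alpha> t n \<le> 1"
    using stay_prob_nonneg jump_prob_nonneg[OF assms] stay_prob_add_jump_prob_le_1[OF assms] by auto
  have "\<bar>Pop \<alpha> t f n\<bar> \<le> \<bar>stay_prob \<alpha> t n * f n\<bar> + \<bar>jump_prob \<alpha> t n * f (Suc n)\<bar>
      + \<bar>(1 - stay_prob \<alpha> t n - jump_prob \<alpha> t n) * f 0\<bar>"
    unfolding Pop_eq by linarith
  also have "\<dots> = stay_prob \<alpha> t n * \<bar>f n\<bar> + jump_prob \<alpha> t n * \<bar>f (Suc n)\<bar>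
      + (1 - stay_prob \<alpha> t n - jump_prob \<alpha> t n) * \<bar>f 0\<bar>"
    using p by (simp add: abs_mult)
  also have "\<dots> \<le> \<bar>f n\<bar> + jump_prob \<alpha> t n * \<bar>f (Suc n)\<bar> + \<bar>f 0\<bar>"
    using p by (intro add_mono mult_left_le_one_le) auto
  finally show ?thesis
    using rhoN_pos[of n] rhoN_pos[of "Suc n"]
    by (simp add: jump_gain_def divide_right_mono add_divide_distrib[symmetric])
qed

lemma Pop_in_B_rhoN:
  assumes "\<alpha> > 1" "t \<ge> 0" "f \<in> B_rho rhoN" shows "Pop \<alpha> t f \<in> B_rho rhoN"
proof -
  have f: "(\<lambda>n. \<bar>f n\<bar> / rhoN n) \<longlonglongrightarrow> 0"
    using tendsto_rabs_zero[OF assms(3)[unfolded B_rhoN_iff]] by (simp add: abs_divide abs_of_pos[OF rhoN_pos])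
  let ?bound = "\<lambda>n. \<bar>f n\<bar> / rhoN n + \<bar>f 0\<bar> * (1 / rhoN n)
    + jump_gain \<alpha> t n * (\<bar>f (Suc n)\<bar> / rhoN (Suc n))"
  have "?bound \<longlonglongrightarrow> 0 + \<bar>f 0\<bar> * 0 + 0 * 0"
    using LIMSEQ_Suc[OF f] by (intro tendsto_add tendsto_mult f jump_gain_tendsto_0 assms
        tendsto_const inverse_rhoN_tendsto_0)
  then have lim: "?bound \<longlonglongrightarrow> 0" by simp
  have le: "norm (Pop \<alpha> t f n / rhoN n) \<le> ?bound n" for n
    using Pop_weighted_le[OF assms(2), of \<alpha> f n] by (simp add: abs_divide abs_of_pos[OF rhoN_pos])
  show ?thesis
    unfolding B_rhoN_iff by (rule Lim_null_comparison[OF always_eventually lim]) (use le in blast)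
qed

lemma rho_norm_Pop_le:
  assumes "\<alpha> > 1" "t \<ge> 0"
  obtains C where "\<And>f. f \<in> B_rho rhoN \<Longrightarrow> rho_norm rhoN (Pop \<alpha> t f) \<le> C * rho_norm rhoN f"
proof -
  obtain H where H: "\<And>n. norm (jump_gain \<alpha> t n) \<le> H"
    using convergent_imp_Bseq[OF convergentI[OF jump_gain_tendsto_0[OF assms]]] unfolding Bseq_def by auto
  have "rho_norm rhoN (Pop \<alpha> t f) \<le> (2 + H) * rho_norm rhoN f" if "f \<in> B_rho rhoN" for f
  proof (rule rho_norm_le)
    fix n
    let ?N = "rho_norm rhoN f"
    have le: "\<bar>f m\<bar> / rhoN m \<le> ?N" for m
      using rho_le_rho_norm[OF B_rho_imp_rho_bdd[OF that]] .
    have "\<bar>f 0\<bar> / rhoN n \<le> \<bar>f 0\<bar> / rhoN 0"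
      by (rule divide_left_mono) (use rhoN_ge_1[of n] rhoN_pos[of n] in \<open>simp_all add: rhoN_def\<close>)
    also have "\<dots> \<le> ?N" by (rule le)
    finally have "\<bar>f 0\<bar> / rhoN n \<le> ?N" .
    moreover have "jump_gain \<alpha> t n * (\<bar>f (Suc n)\<bar> / rhoN (Suc n)) \<le> H * ?N"
      using H[of n] le[of "Suc n"] jump_gain_nonneg[OF assms(2), of \<alpha> n]
      by (intro mult_mono) (auto simp: rhoN_pos less_imp_le)
    ultimately show "\<bar>Pop \<alpha> t f n\<bar> / rhoN n \<le> (2 + H) * ?N"
      using Pop_weighted_le[OF assms(2), of \<alpha> f n] le[of n] by (simp add: algebra_simps)
  qed
  then show ?thesis using that by blast
qed

lemma rho_le_op_norm_rho:
  assumes "f \<in> B_rho r" "rho_norm r f \<le> 1" "T f \<in> B_rho r"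
  shows "ereal (\<bar>T f x\<bar> / r x) \<le> op_norm_rho r T"
proof -
  have "ereal (\<bar>T f x\<bar> / r x) \<le> ereal (rho_norm r (T f))"
    using rho_le_rho_norm[OF B_rho_imp_rho_bdd[OF assms(3)]] by simp
  also have "\<dots> \<le> op_norm_rho r T"
    unfolding op_norm_rho_def by (rule SUP_upper) (use assms(1,2) in simp)
  finally show ?thesis .
qed

lemma jump_gain_le_op_norm_rho:
  assumes "\<alpha> > 1" "t \<ge> 0"
  shows "ereal (jump_gain \<alpha> t k) \<le> op_norm_rho rhoN (Pop \<alpha> t)"
proof -
  define f where "f j = (if j = Suc k then rhoN j else 0)" for j
  have f_B: "f \<in> B_rho rhoN"
  proof -
    have "\<forall>\<^sub>F j in sequentially. f j / rhoN j = 0"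
      unfolding eventually_sequentially by (rule exI[of _ "Suc (Suc k)"]) (auto simp: f_def)
    then show ?thesis unfolding B_rhoN_iff by (rule tendsto_eventually)
  qed
  have "rho_norm rhoN f \<le> 1"
    by (rule rho_norm_le) (auto simp: f_def rhoN_pos less_imp_le)
  moreover have "jump_gain \<alpha> t k = \<bar>Pop \<alpha> t f k\<bar> / rhoN k"
    using jump_prob_nonneg[OF assms(2), of \<alpha> k] rhoN_pos[of k] rhoN_pos[of "Suc k"]
    by (simp add: Pop_eq f_def jump_gain_def abs_divide)
  ultimately show ?thesis
    using rho_le_op_norm_rho f_B Pop_in_B_rhoN[OF assms f_B] by metis
qed

lemma exists_odd_powr_window:
  assumes "\<alpha> \<ge> 1" "0 < t" "t < 1"
  obtains k :: nat where "odd k" "1 \<le> real k powr \<alpha> * t" "real k powr \<alpha> * t \<le> 3 powr \<alpha>"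
proof -
  let ?P = "\<lambda>m::nat. 1 \<le> real (2 * m + 1) powr \<alpha> * t"
  have "?P (nat \<lceil>1 / t\<rceil>)"
  proof -
    have "1 / t \<le> real (2 * nat \<lceil>1 / t\<rceil> + 1)" by linarith
    also have "\<dots> = real (2 * nat \<lceil>1 / t\<rceil> + 1) powr 1" by simp
    also have "\<dots> \<le> real (2 * nat \<lceil>1 / t\<rceil> + 1) powr \<alpha>"
      using assms(1) by (intro powr_mono) auto
    finally show ?thesis using assms(2) by (simp add: field_simps)
  qed
  then obtain m where m: "?P m" and least: "\<And>m'. m' < m \<Longrightarrow> \<not> ?P m'"
    using exists_least_iff[of ?P] by blast
  have "m \<noteq> 0" using m assms(3) by (intro notI) simp
  then have below: "real (2 * m - 1) powr \<alpha> * t < 1"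
    using least[of "m - 1"] by (simp add: algebra_simps)
  have "real (2 * m + 1) \<le> 3 * real (2 * m - 1)" using \<open>m \<noteq> 0\<close> by linarith
  then have "real (2 * m + 1) powr \<alpha> \<le> (3 * real (2 * m - 1)) powr \<alpha>"
    using assms(1) by (intro powr_mono2) auto
  then have "real (2 * m + 1) powr \<alpha> \<le> 3 powr \<alpha> * real (2 * m - 1) powr \<alpha>"
    by (simp add: powr_mult)
  then have "real (2 * m + 1) powr \<alpha> * t \<le> 3 powr \<alpha> * (real (2 * m - 1) powr \<alpha> * t)"
    using assms(2) by (simp add: mult_right_mono mult.assoc)
  also have "\<dots> \<le> 3 powr \<alpha>" using below by (simp add: mult_left_le)
  finally show ?thesis using that[of "2 * m + 1"] m by simp
qed

lemma SUP_jump_gain_tendsto_PInfty: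
  assumes "\<alpha> > 1"
  shows "((\<lambda>t. SUP k. ereal (jump_gain \<alpha> t k)) \<longlongrightarrow> \<infinity>) (at_right 0)"
  unfolding tendsto_PInfty
proof
  fix r :: real
  define K :: nat where "K = nat \<lceil>\<bar>r\<bar> + 3 powr \<alpha>\<rceil>"
  have "((\<lambda>t. real K powr \<alpha> * t) \<longlongrightarrow> real K powr \<alpha> * 0) (at_right 0)"
    by (intro tendsto_intros)
  from order_tendstoD(2)[OF this, of 1]
  have "\<forall>\<^sub>F t in at_right 0. real K powr \<alpha> * t < 1" by simp
  moreover have "\<forall>\<^sub>F t in at_right (0::real). 0 < t \<and> t < 1"
    by (intro eventually_conj eventually_at_right_less) (simp add: eventually_at_right_field exI[of _ 1])
  ultimately show "\<forall>\<^sub>F t in at_right 0. ereal r < (SUP k. ereal (jump_gain \<alpha> t k))"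
  proof eventually_elim
    case (elim t)
    then obtain k where k: "odd k" "1 \<le> real k powr \<alpha> * t" "real k powr \<alpha> * t \<le> 3 powr \<alpha>"
      using exists_odd_powr_window[of \<alpha> t] assms by auto
    have "K < k"
    proof (rule ccontr)
      assume "\<not> K < k"
      then have "real k powr \<alpha> * t \<le> real K powr \<alpha> * t"
        using assms elim by (intro mult_right_mono powr_mono2) auto
      then show False using k(2) elim by linarith
    qed
    have "r < 1 + (real K + 1 - 3 powr \<alpha>)" unfolding K_def by linarith
    also have "\<dots> \<le> exp (real k + 1 - real k powr \<alpha> * t)"
      using \<open>K < k\<close> k(3) by (intro exp_ge_add_one_self[THEN order_trans]) simp
    also have "\<dots> \<le> jump_gain \<alpha> t k"
      using k(1,2) by (simp add: jump_gain_odd)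
    finally have "ereal r < ereal (jump_gain \<alpha> t k)" by simp
    also have "\<dots> \<le> (SUP k. ereal (jump_gain \<alpha> t k))" by (rule SUP_upper) simp
    finally show ?case .
  qed
qed

lemma op_norm_rho_Pop_tendsto_PInfty:
  assumes "\<alpha> > 1"
  shows "((\<lambda>t. op_norm_rho rhoN (Pop \<alpha> t)) \<longlongrightarrow> \<infinity>) (at_right 0)"
  unfolding tendsto_PInfty
proof
  fix r :: real
  have "\<forall>\<^sub>F t in at_right 0. ereal r < (SUP k. ereal (jump_gain \<alpha> t k)) \<and> 0 < t"
    using SUP_jump_gain_tendsto_PInfty[OF assms] unfolding tendsto_PInfty
    by (intro eventually_conj eventually_at_right_less) auto
  then show "\<forall>\<^sub>F t in at_right 0. ereal r < op_norm_rho rhoN (Pop \<alpha> t)"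
  proof eventually_elim
    case (elim t)
    then have "(SUP k. ereal (jump_gain \<alpha> t k)) \<le> op_norm_rho rhoN (Pop \<alpha> t)"
      using jump_gain_le_op_norm_rho[OF assms] by (intro SUP_least) simp
    then show ?case using elim less_le_trans by blast
  qed
qed

lemma tendsto_PInfty_at_right_imp_unbounded:
  fixes F :: "real \<Rightarrow> ereal"
  assumes "(F \<longlongrightarrow> \<infinity>) (at_right 0)"
  shows "\<not> (\<exists>\<epsilon>>0. \<exists>C::real. \<forall>t\<in>{0..\<epsilon>}. F t \<le> ereal C)"
proof
  assume "\<exists>\<epsilon>>0. \<exists>C::real. \<forall>t\<in>{0..\<epsilon>}. F t \<le> ereal C"
  then obtain \<epsilon> C where "\<epsilon> > 0" and C: "\<And>t. t \<in> {0..\<epsilon>} \<Longrightarrow> F t \<le> ereal C"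
    by blast
  have "\<forall>\<^sub>F t in at_right 0. ereal C < F t"
    using assms unfolding tendsto_PInfty by blast
  moreover have "\<forall>\<^sub>F t in at_right 0. t \<in> {0..\<epsilon>}"
    unfolding eventually_at_right_field using \<open>\<epsilon> > 0\<close> by (auto intro!: exI[of _ \<epsilon>])
  ultimately have "\<forall>\<^sub>F t in at_right (0::real). False"
    by eventually_elim (use C in \<open>fastforce simp: not_le[symmetric]\<close>)
  then show False by (simp add: trivial_limit_at_right_real)
qed

text \<open>
  Its weighted size e^(-n) vanishes, yet at time t = k^(-alpha) the jump from an odd state k
  transports the fixed fraction e^(-1) of the weight rho(k).
\<close>

definition damped_even :: "nat \<Rightarrow> real" where
  "damped_even j = (if even j \<and> j \<noteq> 0 then rhoN j * exp (- real j) else 0)"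

lemma damped_even_in_B_rhoN: "damped_even \<in> B_rho rhoN"
  unfolding B_rhoN_iff
proof (rule Lim_null_comparison[OF always_eventually])
  show "(\<lambda>j. exp (- real j)) \<longlonglongrightarrow> 0" by real_asymp
  show "\<forall>j. norm (damped_even j / rhoN j) \<le> exp (- real j)"
    by (simp add: damped_even_def abs_mult abs_of_pos[OF rhoN_pos])
qed

lemma Pop_damped_even_odd:
  assumes "odd k"
  shows "Pop \<alpha> t damped_even k - damped_even k = jump_gain \<alpha> t k * rhoN k * exp (- real (Suc k))"
  using assms rhoN_pos[of k]
  by (simp add: Pop_eq damped_even_def jump_gain_def)

lemma Pop_not_strongly_continuous:
  assumes "\<alpha> > 1"
  shows "\<not> ((\<lambda>t. rho_norm rhoN (\<lambda>x. Pop \<alpha> t damped_even x - damped_even x)) \<longlongrightarrow> 0) (at_right 0)"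
proof
  let ?d = "\<lambda>t. rho_norm rhoN (\<lambda>x. Pop \<alpha> t damped_even x - damped_even x)"
  define s where "s m = 1 / real (2 * m + 1) powr \<alpha>" for m :: nat
  assume "(?d \<longlongrightarrow> 0) (at_right 0)"
  moreover have "filterlim s (at_right 0) sequentially"
  proof (rule tendsto_imp_filterlim_at_right)
    show "s \<longlonglongrightarrow> 0" unfolding s_def using assms by real_asymp
  qed (simp add: s_def)
  ultimately have "(\<lambda>m. ?d (s m)) \<longlonglongrightarrow> 0" by (rule filterlim_compose)
  moreover have "exp (- 1) \<le> ?d (s m)" for m
  proof -
    let ?k = "2 * m + 1"
    have "real ?k powr \<alpha> * s m = 1" by (simp add: s_def)
    then have "jump_gain \<alpha> (s m) ?k = exp (real ?k)"
      using jump_gain_odd[of ?k \<alpha> "s m"] by simp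
    then have "exp (- 1) = \<bar>Pop \<alpha> (s m) damped_even ?k - damped_even ?k\<bar> / rhoN ?k"
      using rhoN_pos[of ?k] by (simp add: Pop_damped_even_odd abs_mult exp_add[symmetric])
    also have "\<dots> \<le> ?d (s m)"
      using assms damped_even_in_B_rhoN
      by (intro rho_le_rho_norm B_rho_imp_rho_bdd B_rhoN_diff Pop_in_B_rhoN) (auto simp: s_def)
    finally show ?thesis .
  qed
  ultimately have "exp (- 1) \<le> (0::real)" by (intro LIMSEQ_le_const) auto
  then show False by simp
qed

theorem mainTheorem20:
  fixes \<alpha> :: real
  assumes "\<alpha> > 1"
  shows
    \<comment> \<open>each P(t) is a well-defined bounded linear operator on B^rho(N)\<close>
    "(\<forall>t\<ge>0. \<forall>f\<in>B_rho rhoN. \<forall>n. summable (\<lambda>j. ptrans \<alpha> t n j * f j))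
   \<and> (\<forall>t\<ge>0. \<forall>f\<in>B_rho rhoN. Pop \<alpha> t f \<in> B_rho rhoN)
   \<and> (\<forall>t\<ge>0. \<forall>f\<in>B_rho rhoN. \<forall>g\<in>B_rho rhoN. \<forall>a b::real.
        Pop \<alpha> t (\<lambda>x. a * f x + b * g x) = (\<lambda>x. a * Pop \<alpha> t f x + b * Pop \<alpha> t g x))
   \<and> (\<forall>t\<ge>0. \<exists>C. \<forall>f\<in>B_rho rhoN. rho_norm rhoN (Pop \<alpha> t f) \<le> C * rho_norm rhoN f)
    \<comment> \<open>formula for P(t) rho (n), n odd\<close>
   \<and> (\<forall>t\<ge>0. \<forall>n. odd n \<longrightarrow>
        Pop \<alpha> t rhoN n = rhoN n * exp (- (real n powr \<alpha>) * t)
          + rhoN (n + 1) * real n powr \<alpha> * t * exp (- (real n powr \<alpha>) * t) * exp (- real n)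
          + rhoN 0 * (1 - exp (- (real n powr \<alpha>) * t)
                     - exp (- real n) * real n powr \<alpha> * t * exp (- (real n powr \<alpha>) * t)))
    \<comment> \<open>(P1)\<close>
   \<and> (\<forall>f\<in>B_rho rhoN. Pop \<alpha> 0 f = f)
    \<comment> \<open>(P2)\<close>
   \<and> (\<forall>s\<ge>0. \<forall>t\<ge>0. \<forall>f\<in>B_rho rhoN. Pop \<alpha> (t + s) f = Pop \<alpha> s (Pop \<alpha> t f))
    \<comment> \<open>(P3)\<close>
   \<and> (\<forall>f\<in>B_rho rhoN. \<forall>x. ((\<lambda>t. Pop \<alpha> t f x) \<longlongrightarrow> f x) (at_right 0))
    \<comment> \<open>(P5)\<close>
   \<and> (\<forall>t\<ge>0. \<forall>f\<in>B_rho rhoN. (\<forall>x. f x \<ge> 0) \<longrightarrow> (\<forall>x. Pop \<alpha> t f x \<ge> 0))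
    \<comment> \<open>operator norm blows up as t tends to 0+\<close>
   \<and> ((\<lambda>t. op_norm_rho rhoN (Pop \<alpha> t)) \<longlongrightarrow> \<infinity>) (at_right 0)
    \<comment> \<open>(P4) fails\<close>
   \<and> \<not> (\<exists>\<epsilon>>0. \<exists>C::real. \<forall>t\<in>{0..\<epsilon>}. op_norm_rho rhoN (Pop \<alpha> t) \<le> ereal C)
    \<comment> \<open>not strongly continuous\<close>
   \<and> \<not> (\<forall>f\<in>B_rho rhoN. ((\<lambda>t. rho_norm rhoN (\<lambda>x. Pop \<alpha> t f x - f x)) \<longlongrightarrow> 0) (at_right 0))"
proof (intro conjI)
  show "\<forall>t\<ge>0. \<forall>f\<in>B_rho rhoN. \<forall>n. summable (\<lambda>j. ptrans \<alpha> t n j * f j)"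
    using summable_ptrans_row by blast
  show "\<forall>t\<ge>0. \<forall>f\<in>B_rho rhoN. Pop \<alpha> t f \<in> B_rho rhoN"
    using Pop_in_B_rhoN[OF assms] by blast
  show "\<forall>t\<ge>0. \<forall>f\<in>B_rho rhoN. \<forall>g\<in>B_rho rhoN. \<forall>a b::real.
      Pop \<alpha> t (\<lambda>x. a * f x + b * g x) = (\<lambda>x. a * Pop \<alpha> t f x + b * Pop \<alpha> t g x)"
    using Pop_linear by blast
  show "\<forall>t\<ge>0. \<exists>C. \<forall>f\<in>B_rho rhoN. rho_norm rhoN (Pop \<alpha> t f) \<le> C * rho_norm rhoN f"
    using rho_norm_Pop_le[OF assms] by metis
  show "\<forall>t\<ge>0. \<forall>n. odd n \<longrightarrow> Pop \<alpha> t rhoN n = rhoN n * exp (- (real n powr \<alpha>) * t)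
      + rhoN (n + 1) * real n powr \<alpha> * t * exp (- (real n powr \<alpha>) * t) * exp (- real n)
      + rhoN 0 * (1 - exp (- (real n powr \<alpha>) * t)
                 - exp (- real n) * real n powr \<alpha> * t * exp (- (real n powr \<alpha>) * t))"
    using Pop_odd_rhoN by blast
  show "\<forall>f\<in>B_rho rhoN. Pop \<alpha> 0 f = f"
    using Pop_zero_time by blast
  show "\<forall>s\<ge>0. \<forall>t\<ge>0. \<forall>f\<in>B_rho rhoN. Pop \<alpha> (t + s) f = Pop \<alpha> s (Pop \<alpha> t f)"
    using Pop_add_time by blast
  show "\<forall>f\<in>B_rho rhoN. \<forall>x. ((\<lambda>t. Pop \<alpha> t f x) \<longlongrightarrow> f x) (at_right 0)"
    using Pop_tendsto_at_right_0 by blast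
  show "\<forall>t\<ge>0. \<forall>f\<in>B_rho rhoN. (\<forall>x. f x \<ge> 0) \<longrightarrow> (\<forall>x. Pop \<alpha> t f x \<ge> 0)"
    using Pop_nonneg by blast
  show "((\<lambda>t. op_norm_rho rhoN (Pop \<alpha> t)) \<longlongrightarrow> \<infinity>) (at_right 0)"
    by (rule op_norm_rho_Pop_tendsto_PInfty[OF assms])
  then show "\<not> (\<exists>\<epsilon>>0. \<exists>C::real. \<forall>t\<in>{0..\<epsilon>}. op_norm_rho rhoN (Pop \<alpha> t) \<le> ereal C)"
    by (rule tendsto_PInfty_at_right_imp_unbounded)
  show "\<not> (\<forall>f\<in>B_rho rhoN. ((\<lambda>t. rho_norm rhoN (\<lambda>x. Pop \<alpha> t f x - f x)) \<longlongrightarrow> 0) (at_right 0))"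
    using Pop_not_strongly_continuous[OF assms] damped_even_in_B_rhoN by blast
qed

end
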